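(* Let $p$ be an odd prime and let $(P_n)_{n\ge0}$ be the Catalan-Larcombe-French numbers. Then $P_{p-1}\equiv(-1)^{\frac{p-1}{2}}\pmod{p}$ and $16P_{p-2}\equiv(-1)^{\frac{p-1}{2}}\pmod{p}$.
   Context: The Catalan-Larcombe-French numbers are defined by $P_0=1$, $P_1=8$ and, for $n\ge 2$, $n^2P_n-8(3n^2-3n+1)P_{n-1}+128(n-1)^2P_{n-2}=0$. Equivalently, $P_n=\frac{1}{n!}\sum_{r+s=n}\binom{2r}{r}\binom{2s}{s}\frac{(2r)!(2s)!}{r!s!}$ (sum over nonnegative integers $r,s$). *)

theory Defs
  imports "HOL-Number_Theory.Number_Theory"
begin

text \<open>Catalan-Larcombe-French numbers via the defining recurrence
  n^2 P n = 8(3n^2-3n+1) P(n-1) - 128 (n-1)^2 P(n-2); the division is exact.\<close>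
fun clf :: "nat \<Rightarrow> int" where
  "clf 0 = 1"
| "clf (Suc 0) = 8"
| "clf (Suc (Suc m)) =
     (let n = int m + 2 in
      (8 * (3*n^2 - 3*n + 1) * clf (Suc m) - 128 * (n - 1)^2 * clf m) div n^2)"

end

theory Submission
  imports Defs
begin

text \<open>Checking the recurrence shows
  \<open>P\<^sub>n = 2\<^sup>n \<Sum>\<^sub>k (n choose 2k) (2k choose k)\<^sup>2 4\<^sup>n\<^sup>-\<^sup>2\<^sup>k\<close>:
  applied to the summands, the recurrence operator telescopes by a Zeilberger certificate.
  Modulo \<open>p = 2h + 1\<close> one has \<open>(2k choose k) \<equiv> (-4)\<^sup>k (h choose k)\<close> for \<open>k \<le> h\<close>,
  \<open>(p - 1 choose j) \<equiv> (-1)\<^sup>j\<close> and \<open>(p - 2 choose j) \<equiv> (-1)\<^sup>j (j + 1)\<close>.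
  Together with Fermat's little theorem this gives
  \<open>P\<^sub>p\<^sub>-\<^sub>1 \<equiv> \<Sum>\<^sub>k (h choose k)\<^sup>2 = (p - 1 choose h) \<equiv> (-1)\<^sup>h\<close> and
  \<open>16 P\<^sub>p\<^sub>-\<^sub>2 \<equiv> 2 \<Sum>\<^sub>k (2k + 1) (h choose k)\<^sup>2 = (p + 1) (p - 1 choose h) \<equiv> (-1)\<^sup>h\<close>.\<close>

lemma of_nat_binomial_Suc_mult:
  "(of_nat (n choose Suc k) :: 'a::comm_ring_1) * (of_nat k + 1) = of_nat (n choose k) * (of_nat n - of_nat k)"
proof (cases "k \<le> n")
  case True
  have "(n choose Suc k) * Suc k = (n choose k) * (n - k)"
    using Suc_times_binomial_eq[of "n - 1" k] binomial_absorb_comp[of n k] True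
    by (cases n) (simp_all add: mult.commute)
  then have "(of_nat ((n choose Suc k) * Suc k) :: 'a) = of_nat ((n choose k) * (n - k))"
    by (rule arg_cong)
  then show ?thesis using True by (simp add: of_nat_diff algebra_simps)
qed (simp add: binomial_eq_0)

lemma central_binomial_Suc:
  "Suc k * ((2 * Suc k) choose Suc k) = 2 * (2 * k + 1) * ((2 * k) choose k)"
proof -
  have odd_sym: "(Suc (2 * k) choose k) = (Suc (2 * k) choose Suc k)"
    using central_binomial_odd[of "Suc (2 * k)"] by simp
  have two_Suc: "2 * Suc k = Suc (Suc (2 * k))" by simp
  have "Suc k * (Suc k * ((2 * Suc k) choose Suc k)) = Suc k * (2 * Suc k * (Suc (2 * k) choose k))"
    unfolding two_Suc Suc_times_binomial ..
  also have "\<dots> = Suc k * (2 * (Suc k * (Suc (2 * k) choose Suc k)))"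
    unfolding odd_sym by (simp only: mult_ac)
  also have "\<dots> = Suc k * (2 * (2 * k + 1) * ((2 * k) choose k))"
    by (simp only: Suc_times_binomial) simp
  finally show ?thesis by (simp only: mult_cancel1) simp
qed

lemma sum_odd_times_binomial_sq:
  "(\<Sum>k\<le>h. (2 * k + 1) * (h choose k)^2) = (h + 1) * ((2 * h) choose h)"
proof -
  define f where "f k = (2 * k + 1) * (h choose k)^2" for k
  have "(\<Sum>k\<le>h. f k) = (\<Sum>k\<le>h. f (h - k))"
    using sum.atLeastAtMost_rev[of f 0 h] by (simp add: atLeast0AtMost)
  also have "\<dots> = (\<Sum>k\<le>h. (2 * (h - k) + 1) * (h choose k)^2)"
    by (intro sum.cong) (simp_all add: f_def binomial_symmetric[symmetric])
  finally have "2 * (\<Sum>k\<le>h. f k) = (\<Sum>k\<le>h. f k + (2 * (h - k) + 1) * (h choose k)^2)"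
    by (simp add: sum.distrib)
  also have "\<dots> = (\<Sum>k\<le>h. 2 * (h + 1) * (h choose k)^2)"
  proof (intro sum.cong refl)
    fix k assume "k \<in> {..h}"
    then have "(2 * k + 1) + (2 * (h - k) + 1) = 2 * (h + 1)" by simp
    then show "f k + (2 * (h - k) + 1) * (h choose k)^2 = 2 * (h + 1) * (h choose k)^2"
      unfolding f_def by (metis add_mult_distrib)
  qed
  also have "\<dots> = 2 * ((h + 1) * ((2 * h) choose h))"
    by (simp only: sum_distrib_left[symmetric] choose_square_sum mult.assoc)
  finally show ?thesis by (simp add: f_def)
qed

lemma sum_atMost_eq_if_vanishing:
  fixes f :: "nat \<Rightarrow> 'a::comm_monoid_add"
  assumes "\<And>k. n < 2 * k \<Longrightarrow> f k = 0" and "n \<le> 2 * K + 1"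
  shows "(\<Sum>k\<le>n. f k) = (\<Sum>k\<le>K. f k)"
proof -
  have "(\<Sum>k\<le>n. f k) = (\<Sum>k\<le>n + K. f k)" "(\<Sum>k\<le>K. f k) = (\<Sum>k\<le>n + K. f k)"
    using assms by (auto intro!: sum.mono_neutral_left assms(1))
  then show ?thesis by simp
qed

definition central_weight :: "nat \<Rightarrow> real" where
  "central_weight k = real ((2 * k) choose k)^2 / 16^k"

lemma central_weight_Suc:
  "4 * (real k + 1)^2 * central_weight (Suc k) = (2 * real k + 1)^2 * central_weight k"
proof -
  define C C' where "C = (2 * k) choose k" and "C' = (2 * Suc k) choose Suc k"
  have "real (Suc k * C') = real (2 * (2 * k + 1) * C)"
    unfolding C_def C'_def central_binomial_Suc ..
  then have "(real k + 1) * real C' = 2 * (2 * real k + 1) * real C"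
    by (simp add: algebra_simps)
  then have "((real k + 1) * real C')^2 = (2 * ((2 * real k + 1) * real C))^2"
    by (simp only: mult.assoc)
  then have "(real k + 1)^2 * real C'^2 = 4 * ((2 * real k + 1)^2 * real C^2)"
    by (simp only: power_mult_distrib) simp
  then show ?thesis
    unfolding central_weight_def C_def[symmetric] C'_def[symmetric] by (simp add: field_simps)
qed

text \<open>\<open>clf_scaled n\<close> will turn out to be \<open>P\<^sub>n / 8\<^sup>n\<close>.\<close>
definition clf_scaled :: "nat \<Rightarrow> real" where
  "clf_scaled n = (\<Sum>k\<le>n. real (n choose (2 * k)) * central_weight k)"

definition recurrence_term :: "nat \<Rightarrow> nat \<Rightarrow> real" where
  "recurrence_term m k =
     ((real m + 2)^2 * real ((m + 2) choose (2 * k))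
      - (3 * (real m + 2)^2 - 3 * (real m + 2) + 1) * real ((m + 1) choose (2 * k))
      + 2 * (real m + 1)^2 * real (m choose (2 * k))) * central_weight k"

text \<open>Zeilberger's certificate for the recurrence.\<close>
definition recurrence_certificate :: "nat \<Rightarrow> nat \<Rightarrow> real" where
  "recurrence_certificate m k = - (real m + 1) * (2 * real k + 1) * real (m choose (2 * k)) * central_weight k"

lemma recurrence_certificate_identity:
  fixes m k X U V w w' :: real
  assumes "k \<ge> 0"
    and "(2 * k + 1) * U = (m - 2 * k) * X" and "(2 * k + 2) * V = (m - 2 * k - 1) * U"
    and "4 * (k + 1)^2 * w' = (2 * k + 1)^2 * w"
  shows "((m + 2)^2 * (X + 2 * U + V) - (3 * (m + 2)^2 - 3 * (m + 2) + 1) * (U + V) + 2 * (m + 1)^2 * V) * w'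
       = - (m + 1) * (2 * k + 3) * V * w' + (m + 1) * (2 * k + 1) * X * w"
proof -
  have "(2 * k + 2) * (4 * (k + 1)^2) *
        (((m + 2)^2 * (X + 2 * U + V) - (3 * (m + 2)^2 - 3 * (m + 2) + 1) * (U + V) + 2 * (m + 1)^2 * V) * w')
      = (2 * k + 2) * (4 * (k + 1)^2) * (- (m + 1) * (2 * k + 3) * V * w' + (m + 1) * (2 * k + 1) * X * w)"
    using assms(2-4) by Groebner_Basis.algebra \<comment> \<open>qualified: HOL-Algebra's \<open>algebra\<close> method shadows it\<close>
  moreover have "(2 * k + 2) * (4 * (k + 1)^2) \<noteq> 0" using assms(1) by simp
  ultimately show ?thesis by simp
qed

lemma recurrence_term_0: "recurrence_term m 0 = recurrence_certificate m 0"
  by (simp add: recurrence_term_def recurrence_certificate_def central_weight_def algebra_simps power2_eq_square)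

lemma recurrence_term_Suc:
  "recurrence_term m (Suc k) = recurrence_certificate m (Suc k) - recurrence_certificate m k"
proof -
  define X where "X = real (m choose (2 * k))"
  define U where "U = real (m choose Suc (2 * k))"
  define V where "V = real (m choose Suc (Suc (2 * k)))"
  have U_eq: "(2 * real k + 1) * U = (real m - 2 * real k) * X"
    using of_nat_binomial_Suc_mult[of m "2 * k"] by (simp add: U_def X_def mult.commute)
  have V_eq: "(2 * real k + 2) * V = (real m - 2 * real k - 1) * U"
    using of_nat_binomial_Suc_mult[of m "Suc (2 * k)"] by (simp add: U_def V_def algebra_simps)
  have "real ((m + 1) choose (2 * Suc k)) = U + V"
    and "real ((m + 2) choose (2 * Suc k)) = X + 2 * U + V"
    by (simp_all add: X_def U_def V_def numeral_2_eq_2)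
  then show ?thesis
    using recurrence_certificate_identity[OF _ U_eq V_eq central_weight_Suc]
    by (simp add: recurrence_term_def recurrence_certificate_def V_def X_def algebra_simps)
qed

lemma clf_scaled_recurrence:
  "(real m + 2)^2 * clf_scaled (m + 2)
     = (3 * (real m + 2)^2 - 3 * (real m + 2) + 1) * clf_scaled (m + 1) - 2 * (real m + 1)^2 * clf_scaled m"
proof -
  have telescope: "(\<Sum>k\<le>K. recurrence_term m k) = recurrence_certificate m K" for K
    by (induction K) (simp_all add: recurrence_term_0 recurrence_term_Suc)
  have upto: "clf_scaled n = (\<Sum>k\<le>m + 2. real (n choose (2 * k)) * central_weight k)" if "n \<le> m + 2" for n
    unfolding clf_scaled_def using that by (intro sum_atMost_eq_if_vanishing) (simp_all add: binomial_eq_0)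
  have "(real m + 2)^2 * clf_scaled (m + 2) - (3 * (real m + 2)^2 - 3 * (real m + 2) + 1) * clf_scaled (m + 1)
          + 2 * (real m + 1)^2 * clf_scaled m = (\<Sum>k\<le>m + 2. recurrence_term m k)"
    by (simp add: upto sum_distrib_left sum_subtractf sum.distrib recurrence_term_def algebra_simps)
  also have "\<dots> = 0" by (simp only: telescope) (simp add: recurrence_certificate_def binomial_eq_0)
  finally show ?thesis by simp
qed

definition clf_binomial_sum :: "nat \<Rightarrow> int" where
  "clf_binomial_sum n = (\<Sum>k\<le>n. int (n choose (2 * k)) * int ((2 * k) choose k)^2 * 4^(n - 2 * k))"

lemma of_int_clf_binomial_sum: "real_of_int (clf_binomial_sum n) = 4^n * clf_scaled n"
  unfolding clf_binomial_sum_def clf_scaled_def sum_distrib_left of_int_sum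
proof (intro sum.cong refl)
  fix k
  show "real_of_int (int (n choose (2 * k)) * int ((2 * k) choose k)^2 * 4^(n - 2 * k))
      = 4^n * (real (n choose (2 * k)) * central_weight k)"
  proof (cases "2 * k \<le> n")
    case True
    then have "(4::real)^n = 4^(n - 2 * k) * 4^(2 * k)"
      by (simp flip: power_add)
    also have "(4::real)^(2 * k) = 16^k"
      by (simp add: power_mult)
    finally show ?thesis by (simp add: central_weight_def)
  qed (simp add: binomial_eq_0)
qed

lemma clf_eq_binomial_sum: "clf n = 2^n * clf_binomial_sum n"
proof (induction n rule: clf.induct)
  case (3 m)
  then have IH: "clf (Suc m) = 2^Suc m * clf_binomial_sum (Suc m)" "clf m = 2^m * clf_binomial_sum m"
    by simp_all
  define N where "N = int m + 2"
  have eight: "(8::real)^m = 2^m * 4^m" by (simp flip: power_mult_distrib)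
  have "real_of_int (8 * (3 * N^2 - 3 * N + 1) * clf (Suc m) - 128 * (N - 1)^2 * clf m)
      = 8^m * 64 * ((3 * (real m + 2)^2 - 3 * (real m + 2) + 1) * clf_scaled (m + 1) - 2 * (real m + 1)^2 * clf_scaled m)"
    unfolding IH eight by (simp add: of_int_clf_binomial_sum N_def power_mult_distrib algebra_simps)
  also have "\<dots> = 8^m * 64 * ((real m + 2)^2 * clf_scaled (m + 2))"
    by (simp only: clf_scaled_recurrence)
  also have "\<dots> = real_of_int (N^2 * (2^Suc (Suc m) * clf_binomial_sum (Suc (Suc m))))"
    unfolding eight by (simp add: of_int_clf_binomial_sum N_def power_mult_distrib algebra_simps)
  finally have "8 * (3 * N^2 - 3 * N + 1) * clf (Suc m) - 128 * (N - 1)^2 * clf m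
      = N^2 * (2^Suc (Suc m) * clf_binomial_sum (Suc (Suc m)))"
    by (simp only: of_int_eq_iff)
  moreover have "N^2 \<noteq> 0" by (simp add: N_def)
  ultimately show ?case by (simp add: Let_def flip: N_def)
qed (simp_all add: clf_binomial_sum_def)

lemma binomial_pred_prime_cong:
  assumes "prime p" and "j < p"
  shows "[int ((p - 1) choose j) = (-1)^j] (mod int p)"
  using assms(2)
proof (induction j)
  case (Suc j)
  have "p = Suc (p - 1)" using prime_gt_1_nat[OF assms(1)] by simp
  then have pascal: "int (p choose Suc j) = int ((p - 1) choose j) + int ((p - 1) choose Suc j)"
    by (metis binomial_Suc_Suc of_nat_add)
  have "int p dvd int (p choose Suc j)"
    using dvd_choose_prime[OF Suc.prems] assms(1) by simp
  then have "[int ((p - 1) choose Suc j) = 0 - int ((p - 1) choose j)] (mod int p)"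
    unfolding pascal cong_iff_dvd_diff by (simp add: add.commute)
  also have "[0 - int ((p - 1) choose j) = 0 - (-1)^j] (mod int p)"
    using Suc by (intro cong_diff) simp_all
  finally show ?case by simp
qed simp

lemma binomial_pred2_prime_cong:
  assumes "prime p" and "j < p"
  shows "[int ((p - 2) choose j) = (-1)^j * (int j + 1)] (mod int p)"
  using assms(2)
proof (induction j)
  case (Suc j)
  have "p - 1 = Suc (p - 2)" using prime_gt_1_nat[OF assms(1)] by simp
  then have pascal: "int ((p - 1) choose Suc j) = int ((p - 2) choose j) + int ((p - 2) choose Suc j)"
    by (metis binomial_Suc_Suc of_nat_add)
  have "[int ((p - 2) choose Suc j) = int ((p - 1) choose Suc j) - int ((p - 2) choose j)] (mod int p)"
    unfolding pascal by simp
  also have "[int ((p - 1) choose Suc j) - int ((p - 2) choose j) = (-1)^Suc j - (-1)^j * (int j + 1)] (mod int p)"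
    using Suc binomial_pred_prime_cong[OF assms(1), of "Suc j"] by (intro cong_diff) simp_all
  also have "(-1)^Suc j - (-1)^j * (int j + 1) = (-1)^Suc j * (int (Suc j) + 1)"
    by (simp add: algebra_simps)
  finally show ?case .
qed simp

text \<open>Modulo \<open>p = 2h + 1\<close> we have \<open>h \<equiv> -1/2\<close>, and
  \<open>(2k choose k) = (-4)\<^sup>k (-1/2 gchoose k)\<close>.\<close>
lemma central_binomial_prime_cong:
  assumes "prime p" and "p = 2 * h + 1" and "k \<le> h"
  shows "[int ((2 * k) choose k) = (-4)^k * int (h choose k)] (mod int p)"
  using assms(3)
proof (induction k)
  case (Suc k)
  have "2 * (2 * int k + 1) - (-4) * (int h - int k) = int p * 2"
    using assms(2) by simp
  then have factor: "[2 * (2 * int k + 1) = (-4) * (int h - int k)] (mod int p)"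
    unfolding cong_iff_dvd_diff by simp
  have "int (Suc k * ((2 * Suc k) choose Suc k)) = int (2 * (2 * k + 1) * ((2 * k) choose k))"
    by (simp only: central_binomial_Suc)
  then have "(int k + 1) * int ((2 * Suc k) choose Suc k) = 2 * (2 * int k + 1) * int ((2 * k) choose k)"
    by (simp add: algebra_simps)
  also have "[2 * (2 * int k + 1) * int ((2 * k) choose k) = (-4) * (int h - int k) * ((-4)^k * int (h choose k))] (mod int p)"
    using Suc by (intro cong_mult[OF factor]) simp
  also have "(-4) * (int h - int k) * ((-4)^k * int (h choose k)) = (-4)^Suc k * (int (h choose k) * (int h - int k))"
    by (simp add: algebra_simps)
  also have "\<dots> = (int k + 1) * ((-4)^Suc k * int (h choose Suc k))"
    by (simp add: of_nat_binomial_Suc_mult[of h k, symmetric] mult_ac)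
  finally have "[(int k + 1) * int ((2 * Suc k) choose Suc k) = (int k + 1) * ((-4)^Suc k * int (h choose Suc k))] (mod int p)" .
  moreover have "coprime (int k + 1) (int p)"
  proof -
    have "\<not> p dvd Suc k" using Suc.prems assms(2) by (auto dest: dvd_imp_le)
    then have "coprime (Suc k) p"
      using prime_imp_coprime[OF assms(1)] coprime_commute by blast
    then show ?thesis by (metis coprime_int_iff of_nat_Suc add.commute)
  qed
  ultimately show ?case using cong_mult_lcancel by blast
qed simp

lemma two_pow_pred_prime_cong:
  assumes "prime p" and "odd p"
  shows "[(2::int)^(p - 1) = 1] (mod int p)"
proof -
  have "\<not> p dvd 2"
  proof
    assume "p dvd 2"
    then have "p \<le> 2" by (rule dvd_imp_le) simp
    with prime_gt_1_nat[OF assms(1)] have "p = 2" by simp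
    with assms(2) show False by simp
  qed
  then have "[2^(p - 1) = 1] (mod p)" using fermat_theorem[OF assms(1)] by simp
  then show ?thesis by (metis cong_int_iff of_nat_1 of_nat_numeral of_nat_power)
qed

lemma four_pow_pred_prime_cong:
  assumes "prime p" and "odd p"
  shows "[(4::int)^(p - 1) = 1] (mod int p)"
proof -
  have "[((2::int)^(p - 1))^2 = 1^2] (mod int p)"
    using two_pow_pred_prime_cong[OF assms] by (rule cong_pow)
  then show ?thesis by (simp add: power_mult[symmetric] mult.commute[of _ 2] power_mult)
qed

lemma clf_binomial_sum_prime_cong:
  assumes "prime p" and "p = 2 * h + 1" and "n \<le> p"
  shows "[clf_binomial_sum n = 4^n * (\<Sum>k\<le>h. int (n choose (2 * k)) * int (h choose k)^2)] (mod int p)"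
proof -
  have "clf_binomial_sum n = (\<Sum>k\<le>h. int (n choose (2 * k)) * int ((2 * k) choose k)^2 * 4^(n - 2 * k))"
    unfolding clf_binomial_sum_def using assms(2,3)
    by (intro sum_atMost_eq_if_vanishing) (simp_all add: binomial_eq_0)
  also have "[\<dots> = (\<Sum>k\<le>h. 4^n * (int (n choose (2 * k)) * int (h choose k)^2))] (mod int p)"
  proof (intro cong_sum)
    fix k assume "k \<in> {..h}"
    show "[int (n choose (2 * k)) * int ((2 * k) choose k)^2 * 4^(n - 2 * k)
        = 4^n * (int (n choose (2 * k)) * int (h choose k)^2)] (mod int p)"
    proof (cases "2 * k \<le> n")
      case True
      have "[int (n choose (2 * k)) * int ((2 * k) choose k)^2 * 4^(n - 2 * k)
          = int (n choose (2 * k)) * ((-4)^k * int (h choose k))^2 * 4^(n - 2 * k)] (mod int p)"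
        using central_binomial_prime_cong[OF assms(1,2)] \<open>k \<in> {..h}\<close>
        by (intro cong_mult cong_pow cong_refl) simp
      also have "int (n choose (2 * k)) * ((-4)^k * int (h choose k))^2 * 4^(n - 2 * k)
          = 4^(2 * k) * 4^(n - 2 * k) * (int (n choose (2 * k)) * int (h choose k)^2)"
        by (simp add: power_mult_distrib power_mult[symmetric] mult.commute)
      also have "(4::int)^(2 * k) * 4^(n - 2 * k) = 4^n"
        using True by (simp flip: power_add)
      finally show ?thesis .
    qed (simp add: binomial_eq_0)
  qed
  finally show ?thesis by (simp add: sum_distrib_left)
qed

lemma clf_pred_prime_cong:
  assumes "prime p" and "p = 2 * h + 1"
  shows "[clf (p - 1) = (-1)^h] (mod int p)"
proof -
  define S where "S = (\<Sum>k\<le>h. int ((p - 1) choose (2 * k)) * int (h choose k)^2)"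
  have "odd p" using assms(2) by simp
  have "[int ((p - 1) choose (2 * k)) = 1] (mod int p)" if "k \<le> h" for k
    using binomial_pred_prime_cong[OF assms(1), of "2 * k"] that assms(2) by simp
  then have "[S = (\<Sum>k\<le>h. 1 * int (h choose k)^2)] (mod int p)"
    unfolding S_def by (intro cong_sum cong_scalar_right) simp
  also have "(\<Sum>k\<le>h. 1 * int (h choose k)^2) = int ((p - 1) choose h)"
    using choose_square_sum[of h] assms(2) by (simp flip: of_nat_power of_nat_sum)
  finally have S: "[S = int ((p - 1) choose h)] (mod int p)" .
  have "clf (p - 1) = 2^(p - 1) * clf_binomial_sum (p - 1)"
    by (rule clf_eq_binomial_sum)
  also have "[2^(p - 1) * clf_binomial_sum (p - 1) = 1 * (4^(p - 1) * S)] (mod int p)"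
    using two_pow_pred_prime_cong[OF assms(1) \<open>odd p\<close>] clf_binomial_sum_prime_cong[OF assms]
    unfolding S_def by (intro cong_mult) simp_all
  also have "[1 * (4^(p - 1) * S) = 1 * (1 * int ((p - 1) choose h))] (mod int p)"
    using four_pow_pred_prime_cong[OF assms(1) \<open>odd p\<close>] S by (intro cong_mult cong_refl)
  also have "[1 * (1 * int ((p - 1) choose h)) = (-1)^h] (mod int p)"
    using binomial_pred_prime_cong[OF assms(1)] assms(2) by simp
  finally show ?thesis .
qed

lemma clf_pred2_prime_cong:
  assumes "prime p" and "p = 2 * h + 1"
  shows "[16 * clf (p - 2) = (-1)^h] (mod int p)"
proof -
  define S where "S = (\<Sum>k\<le>h. int ((p - 2) choose (2 * k)) * int (h choose k)^2)"
  have "odd p" using assms(2) by simp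
  have "[int ((p - 2) choose (2 * k)) = int (2 * k + 1)] (mod int p)" if "k \<le> h" for k
    using binomial_pred2_prime_cong[OF assms(1), of "2 * k"] that assms(2) by (simp add: add.commute)
  then have "[S = (\<Sum>k\<le>h. int (2 * k + 1) * int (h choose k)^2)] (mod int p)"
    unfolding S_def by (intro cong_sum cong_scalar_right) simp
  also have "(\<Sum>k\<le>h. int (2 * k + 1) * int (h choose k)^2) = int ((h + 1) * ((2 * h) choose h))"
    by (simp only: sum_odd_times_binomial_sq[symmetric] of_nat_sum of_nat_mult of_nat_power)
  finally have S: "[S = int ((h + 1) * ((2 * h) choose h))] (mod int p)" .
  have "p - 1 = Suc (p - 2)" using prime_gt_1_nat[OF assms(1)] by simp
  then have "16 * clf (p - 2) = 2^(p - 1) * (8 * clf_binomial_sum (p - 2))"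
    by (simp add: clf_eq_binomial_sum)
  also have "[2^(p - 1) * (8 * clf_binomial_sum (p - 2)) = 1 * (8 * (4^(p - 2) * S))] (mod int p)"
    using two_pow_pred_prime_cong[OF assms(1) \<open>odd p\<close>] clf_binomial_sum_prime_cong[OF assms]
    unfolding S_def by (intro cong_mult cong_refl) simp_all
  also have "1 * (8 * (4^(p - 2) * S)) = 4^(p - 1) * (2 * S)"
    using \<open>p - 1 = Suc (p - 2)\<close> by simp
  also have "[4^(p - 1) * (2 * S) = 1 * (2 * int ((h + 1) * ((2 * h) choose h)))] (mod int p)"
    using four_pow_pred_prime_cong[OF assms(1) \<open>odd p\<close>] S by (intro cong_mult cong_refl)
  also have "1 * (2 * int ((h + 1) * ((2 * h) choose h))) = int p * int ((p - 1) choose h) + int ((p - 1) choose h)"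
    using assms(2) by (simp add: algebra_simps)
  also have "[int p * int ((p - 1) choose h) + int ((p - 1) choose h) = 0 + (-1)^h] (mod int p)"
    using binomial_pred_prime_cong[OF assms(1)] assms(2)
    by (intro cong_add) (simp_all add: cong_0_iff)
  finally show ?thesis by simp
qed

theorem lemma4:
  fixes p :: nat
  assumes "prime p" and "odd p"
  shows "[clf (p - 1) = (-1) ^ ((p - 1) div 2)] (mod int p)
       \<and> [16 * clf (p - 2) = (-1) ^ ((p - 1) div 2)] (mod int p)"
proof -
  have p: "p = 2 * ((p - 1) div 2) + 1" using assms(2) by presburger
  show ?thesis
    using clf_pred_prime_cong[OF assms(1) p] clf_pred2_prime_cong[OF assms(1) p] by blast
qed

end
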